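(* The generating series $f(q;x)=\sum_\gamma q^{\omega_H(\gamma)+\omega_{DU}(\gamma)}x^{n(\gamma)}$, where $\gamma$ ranges over all Schröder paths and $n(\gamma)$ is the semi-length, is $$f(q;x)=\frac{1-x-\sqrt{1-2(1+2q)x+(1-2q)^2x^2}}{2qx\,(1+(1-q)x)}.$$
   Context: Steps: $U=(1,1)$, $D=(1,-1)$, $H=(2,0)$. A Schröder path of semi-length $n$ is a lattice path from $(0,0)$ to $(2n,0)$ with steps $U,D,H$ never going below the $x$-axis. Paths are identified with words of steps; $\omega_H(\gamma)$ is the number of $H$ steps and $\omega_{DU}(\gamma)$ the number of occurrences of the factor $DU$ in $\gamma$. *)

theory Defs
  imports Complex_Main
begin

datatype step = U | D | H

fun dy :: "step \<Rightarrow> int" where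
  "dy U = 1" | "dy D = -1" | "dy H = 0"

fun dx :: "step \<Rightarrow> nat" where
  "dx U = 1" | "dx D = 1" | "dx H = 2"

definition schroeder :: "nat \<Rightarrow> step list \<Rightarrow> bool" where
  "schroeder n w \<longleftrightarrow>
     sum_list (map dx w) = 2 * n \<and>
     sum_list (map dy w) = 0 \<and>
     (\<forall>k \<le> length w. sum_list (map dy (take k w)) \<ge> 0)"

definition omega_H :: "step list \<Rightarrow> nat" where
  "omega_H w = length (filter (\<lambda>s. s = H) w)"

definition omega_DU :: "step list \<Rightarrow> nat" where
  "omega_DU w = card {i. Suc i < length w \<and> w ! i = D \<and> w ! Suc i = U}"

definition schroeder_coeff :: "real \<Rightarrow> nat \<Rightarrow> real" where
  "schroeder_coeff q n = (\<Sum>w\<in>{w. schroeder n w}. q ^ (omega_H w + omega_DU w))"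

end

theory Submission
  imports Defs "HOL-Analysis.FPS_Convergence"
begin

(* Write W(w) = omega_H w + omega_DU w and a_n = \<Sum> q^W(w) over Schroeder paths of
   semi-length n, A(x) = \<Sum> a_n x^n, and B(x) for the same sum restricted to paths that
   start with an up-step.  A nonempty path either starts with H (the rest is any path,
   one more H) or is U a D b with a, b paths (first-return decomposition).  In the
   second case the weight is W(a) + W(b), plus one extra DU exactly when b starts
   with U.  Hence
        A = 1 + q x A + B,     B = x A (A + (q - 1) B),
   and eliminating B gives  q x (1 + (1-q)x) A^2 + (x - 1) A + 1 = 0  as formal power
   series.  Analytically,
   |a_n| \<le> 3 (9 max(1,|q|)^4)^n gives a positive radius of convergence and the bound
   |A(x)| \<le> 6 near 0, and A(x) satisfies the quadratic there.  A general lemma on real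
   quadratics shows that a root lying on the left of the vertex is the minus-branch of
   the quadratic formula; the bound on A(x) puts it there for small x, which yields
   the closed form and hence the main theorem. *)

definition height :: "step list \<Rightarrow> int" where "height w = sum_list (map dy w)"
definition width :: "step list \<Rightarrow> nat" where "width w = sum_list (map dx w)"

fun stays_above :: "int \<Rightarrow> step list \<Rightarrow> bool" where
  "stays_above c [] = (0 \<le> c)"
| "stays_above c (s#w) = (0 \<le> c \<and> stays_above (c + dy s) w)"

lemma height_simps [simp]:
  "height [] = 0" "height (s#w) = dy s + height w" "height (u@v) = height u + height v"
  by (auto simp: height_def)

lemma width_simps [simp]:
  "width [] = 0" "width (s#w) = dx s + width w" "width (u@v) = width u + width v"
  by (auto simp: width_def)

lemma stays_above_iff_prefixes:
  "stays_above c w \<longleftrightarrow> (\<forall>k\<le>length w. 0 \<le> c + sum_list (map dy (take k w)))"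
proof (induction w arbitrary: c)
  case Nil then show ?case by simp
next
  case (Cons s w)
  have "(\<forall>k\<le>length (s#w). 0 \<le> c + sum_list (map dy (take k (s#w)))) \<longleftrightarrow>
        0 \<le> c \<and> (\<forall>k\<le>length w. 0 \<le> c + dy s + sum_list (map dy (take k w)))"
    (is "?L \<longleftrightarrow> ?R")
  proof
    assume L: ?L
    have "0 \<le> c + dy s + sum_list (map dy (take k w))" if "k \<le> length w" for k
      using L[rule_format, of "Suc k"] that by (simp add: add.assoc)
    with L[rule_format, of 0] show ?R by simp
  next
    assume R: ?R
    show ?L
    proof (intro allI impI)
      fix k assume "k \<le> length (s#w)"
      with R show "0 \<le> c + sum_list (map dy (take k (s#w)))"
        by (cases k) (simp_all add: add.assoc)
    qed
  qed
  then show ?case using Cons.IH[of "c + dy s"] by simp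
qed

lemma schroeder_iff: "schroeder n w \<longleftrightarrow> width w = 2*n \<and> height w = 0 \<and> stays_above 0 w"
  unfolding schroeder_def width_def height_def stays_above_iff_prefixes by simp

lemma stays_above_nonneg: "stays_above c w \<Longrightarrow> 0 \<le> c"
  by (cases w) auto

lemma stays_above_append:
  "stays_above c (u@v) \<longleftrightarrow> stays_above c u \<and> stays_above (c + height u) v"
  by (induction u arbitrary: c) (auto simp: add.assoc dest: stays_above_nonneg)

lemma stays_above_mono: "stays_above c w \<Longrightarrow> c \<le> c' \<Longrightarrow> stays_above c' w"
  by (induction w arbitrary: c c') auto

text \<open>Width and height always have the same parity, since every step changes
  width plus height by an even amount.\<close>
lemma even_width_plus_height: "even (int (width w) + height w)"
proof (induction w)
  case (Cons s w)
  have "even (int (dx s) + dy s)" by (cases s) auto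
  moreover have "int (width (s#w)) + height (s#w) = (int (dx s) + dy s) + (int (width w) + height w)"
    by simp
  ultimately show ?case using Cons.IH by (metis even_add)
qed simp

lemma length_le_width: "length w \<le> width w"
proof (induction w)
  case (Cons s w) then show ?case by (cases s) auto
qed simp

section \<open>First-return decomposition\<close>

lemma first_return:
  "0 \<le> c \<Longrightarrow> c + height w < 0 \<Longrightarrow>
   \<exists>a b. w = a @ D # b \<and> stays_above c a \<and> c + height a = 0"
proof (induction w arbitrary: c)
  case Nil then show ?case by simp
next
  case (Cons s w)
  show ?case
  proof (cases "c = 0 \<and> s = D")
    case True then show ?thesis by (intro exI[of _ "[]"] exI[of _ w]) simp
  next
    case False
    have "0 \<le> c + dy s" using False Cons.prems(1) by (cases s) auto
    moreover have "c + dy s + height w < 0" using Cons.prems(2) by (simp add: add.assoc)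
    ultimately obtain a b where "w = a @ D # b" "stays_above (c + dy s) a" "c + dy s + height a = 0"
      using Cons.IH by blast
    then show ?thesis using Cons.prems(1)
      by (intro exI[of _ "s#a"] exI[of _ b]) (simp add: add.assoc)
  qed
qed

text \<open>The first return is unique: a nonnegative prefix ending at height 0 cannot be
  followed later by another such prefix, because the D in between goes below 0.\<close>
lemma first_return_unique:
  assumes eq: "a @ D # b = a' @ D # b'"
    and "stays_above 0 a" "height a = 0" "stays_above 0 a'" "height a' = 0"
  shows "a = a' \<and> b = b'"
proof -
  have no_later_return: False if "stays_above 0 (u @ D # v)" "height u = 0" for u v
    using that by (auto simp: stays_above_append dest: stays_above_nonneg)
  from eq obtain us where
    "(a = a' @ us \<and> us @ D # b = D # b') \<or> (a @ us = a' \<and> D # b = us @ D # b')"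
    by (auto simp: append_eq_append_conv2)
  then show ?thesis
  proof
    assume h: "a = a' @ us \<and> us @ D # b = D # b'"
    show ?thesis
    proof (cases us)
      case (Cons s us')
      with h have "a = a' @ D # us'" by simp
      with assms no_later_return show ?thesis by blast
    qed (use h in simp)
  next
    assume h: "a @ us = a' \<and> D # b = us @ D # b'"
    show ?thesis
    proof (cases us)
      case (Cons s us')
      with h have "a' = a @ D # us'" by auto
      with assms no_later_return show ?thesis by blast
    qed (use h in simp)
  qed
qed

definition paths :: "nat \<Rightarrow> step list set" where "paths n = {w. schroeder n w}"

lemma paths_subset_short_words:
  "paths n \<subseteq> {xs. set xs \<subseteq> {U,D,H} \<and> length xs \<le> 2*n}"
proof
  fix w assume "w \<in> paths n"
  then have "length w \<le> 2*n" using length_le_width[of w] by (auto simp: paths_def schroeder_iff)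
  moreover have "set w \<subseteq> {U,D,H}" using step.exhaust by blast
  ultimately show "w \<in> {xs. set xs \<subseteq> {U,D,H} \<and> length xs \<le> 2*n}" by simp
qed

lemma finite_paths [simp]: "finite (paths n)"
  by (rule finite_subset[OF paths_subset_short_words finite_lists_length_le]) simp

text \<open>A crude count: there are at most \<open>3^(2n+1)\<close> words of length \<open>\<le> 2n\<close>.\<close>
lemma card_paths_le: "card (paths n) \<le> 3 * 9^n"
proof -
  have geometric: "(\<Sum>i\<le>m. (3::nat)^i) \<le> 3^(m+1)" for m
    by (induction m) auto
  have "card (paths n) \<le> card {xs. set xs \<subseteq> {U,D,H} \<and> length xs \<le> 2*n}"
    by (rule card_mono[OF finite_lists_length_le paths_subset_short_words]) simp
  also have "\<dots> = (\<Sum>i\<le>2*n. 3^i)"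
    by (subst card_lists_length_le) (auto simp: numeral_3_eq_3)
  also have "\<dots> \<le> 3^(2*n+1)" by (rule geometric)
  also have "\<dots> = 3 * 9^n" by (simp add: power_mult)
  finally show ?thesis .
qed

lemma paths_0: "paths 0 = {[]}"
  using length_le_width by (auto simp: paths_def schroeder_iff) (metis le_zero_eq length_0_conv)

text \<open>A nonempty path cannot start with D, so it starts with H or with U.\<close>
lemma paths_Suc:
  "paths (Suc n) = Cons H ` paths n \<union> {w \<in> paths (Suc n). w \<noteq> [] \<and> hd w = U}"
proof
  show "paths (Suc n) \<subseteq> Cons H ` paths n \<union> {w \<in> paths (Suc n). w \<noteq> [] \<and> hd w = U}"
  proof
    fix w assume w: "w \<in> paths (Suc n)"
    then obtain s w' where ws: "w = s # w'" by (cases w) (auto simp: paths_def schroeder_iff)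
    with w show "w \<in> Cons H ` paths n \<union> {w \<in> paths (Suc n). w \<noteq> [] \<and> hd w = U}"
      by (cases s) (auto simp: paths_def schroeder_iff dest: stays_above_nonneg)
  qed
qed (auto simp: paths_def schroeder_iff)

definition lift_glue :: "nat \<times> step list \<times> step list \<Rightarrow> step list" where
  "lift_glue = (\<lambda>(i,a,b). U # a @ D # b)"

lemma paths_starting_with_U:
  "{w \<in> paths (Suc n). w \<noteq> [] \<and> hd w = U} =
   lift_glue ` (SIGMA i:{..n}. paths i \<times> paths (n-i))"
proof
  show "{w \<in> paths (Suc n). w \<noteq> [] \<and> hd w = U} \<subseteq> lift_glue ` (SIGMA i:{..n}. paths i \<times> paths (n-i))"
  proof
    fix w assume w: "w \<in> {w \<in> paths (Suc n). w \<noteq> [] \<and> hd w = U}"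
    then obtain rest where w_eq: "w = U # rest" by (cases w) auto
    from w w_eq have rest: "width rest = 2*n + 1" "height rest = -1" "stays_above 1 rest"
      by (auto simp: paths_def schroeder_iff)
    obtain a b where ab: "rest = a @ D # b" "stays_above 0 a" "height a = 0"
      using first_return[of 0 rest] rest by auto
    have b: "stays_above 0 b" "height b = 0"
      using rest ab by (simp_all add: stays_above_append)
    have "even (width a)" using even_width_plus_height[of a] ab(3) by simp
    then obtain i where i: "width a = 2*i" by (auto elim: evenE)
    with rest(1) ab have "i \<le> n" "width b = 2*(n-i)" by auto
    with i ab b have "(i,a,b) \<in> (SIGMA i:{..n}. paths i \<times> paths (n-i))"
      by (auto simp: paths_def schroeder_iff)
    moreover have "w = lift_glue (i,a,b)" using w_eq ab by (simp add: lift_glue_def)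
    ultimately show "w \<in> lift_glue ` (SIGMA i:{..n}. paths i \<times> paths (n-i))" by blast
  qed
next
  show "lift_glue ` (SIGMA i:{..n}. paths i \<times> paths (n-i)) \<subseteq> {w \<in> paths (Suc n). w \<noteq> [] \<and> hd w = U}"
  proof
    fix w assume "w \<in> lift_glue ` (SIGMA i:{..n}. paths i \<times> paths (n-i))"
    then obtain i a b where iab: "i \<le> n" "a \<in> paths i" "b \<in> paths (n-i)" "w = U # a @ D # b"
      by (auto simp: lift_glue_def)
    have "stays_above 1 a" using iab(2) by (auto simp: paths_def schroeder_iff intro: stays_above_mono)
    then show "w \<in> {w \<in> paths (Suc n). w \<noteq> [] \<and> hd w = U}"
      using iab by (auto simp: paths_def schroeder_iff stays_above_append)
  qed
qed

lemma inj_on_lift_glue: "inj_on lift_glue (SIGMA i:{..n}. paths i \<times> paths (n-i))"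
proof (rule inj_onI)
  fix x y assume x: "x \<in> (SIGMA i:{..n}. paths i \<times> paths (n-i))"
    and y: "y \<in> (SIGMA i:{..n}. paths i \<times> paths (n-i))" and eq: "lift_glue x = lift_glue y"
  obtain i a b j a' b' where xy: "x = (i,a,b)" "y = (j,a',b')" by (cases x, cases y) auto
  with x y have h: "stays_above 0 a" "height a = 0" "stays_above 0 a'" "height a' = 0"
    "width a = 2*i" "width a' = 2*j"
    by (auto simp: paths_def schroeder_iff)
  from eq xy have "a @ D # b = a' @ D # b'" by (simp add: lift_glue_def)
  from first_return_unique[OF this h(1-4)] h(5,6) show "x = y" using xy by auto
qed

lemma omega_DU_Nil [simp]: "omega_DU [] = 0"
  by (simp add: omega_DU_def)

lemma omega_DU_Cons:
  "omega_DU (s#w) = (if s = D \<and> w \<noteq> [] \<and> hd w = U then 1 else 0) + omega_DU w"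
proof -
  let ?occ = "\<lambda>w. {i. Suc i < length w \<and> w ! i = D \<and> w ! Suc i = U}"
  have split: "?occ (s#w) = (if s = D \<and> w \<noteq> [] \<and> hd w = U then {0} else {}) \<union> Suc ` ?occ w"
  proof (intro equalityI subsetI)
    fix i assume "i \<in> ?occ (s#w)"
    then show "i \<in> (if s = D \<and> w \<noteq> [] \<and> hd w = U then {0} else {}) \<union> Suc ` ?occ w"
      by (cases i; cases w) auto
  qed (cases w; auto split: if_splits)
  have "finite (?occ w)" by (rule finite_subset[of _ "{..<length w}"]) auto
  then show ?thesis
    unfolding omega_DU_def split by (subst card_Un_disjoint) (auto simp: card_image)
qed

lemma omega_DU_append:
  "omega_DU (a @ b) = omega_DU a + omega_DU b +
     (if a \<noteq> [] \<and> b \<noteq> [] \<and> last a = D \<and> hd b = U then 1 else 0)"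
proof (induction a)
  case (Cons s a)
  then show ?case by (cases a) (simp_all add: omega_DU_Cons)
qed simp

text \<open>The statistic of the theorem, and the indicator of an extra DU when a path
  starting with U is glued after a D.\<close>
definition weight :: "step list \<Rightarrow> nat" where "weight w = omega_H w + omega_DU w"
definition starts_U :: "step list \<Rightarrow> nat" where "starts_U b = (if b \<noteq> [] \<and> hd b = U then 1 else 0)"

lemma weight_H: "weight (H # w) = Suc (weight w)"
  by (simp add: weight_def omega_H_def omega_DU_Cons)

text \<open>In \<open>U a D b\<close> the only new DU factor is at the seam \<open>D b\<close>.\<close>
lemma weight_lift_glue: "weight (U # a @ D # b) = weight a + (weight b + starts_U b)"
  by (simp add: weight_def omega_H_def omega_DU_Cons omega_DU_append starts_U_def)

lemma weight_le: "weight w \<le> 2 * length w"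
proof -
  have "omega_DU w \<le> card {..<length w}" unfolding omega_DU_def by (rule card_mono) auto
  then have "omega_DU w \<le> length w" by simp
  then show ?thesis
    using length_filter_le[of "\<lambda>s. s = H" w] unfolding weight_def omega_H_def by linarith
qed

section \<open>Coefficient recurrences\<close>

definition coeff_U :: "real \<Rightarrow> nat \<Rightarrow> real" where
  "coeff_U q n = (\<Sum>w\<in>{w \<in> paths n. w \<noteq> [] \<and> hd w = U}. q ^ weight w)"

lemma schroeder_coeff_weight: "schroeder_coeff q n = (\<Sum>w\<in>paths n. q ^ weight w)"
  by (simp add: schroeder_coeff_def paths_def weight_def)

lemma schroeder_coeff_0: "schroeder_coeff q 0 = 1"
  by (simp add: schroeder_coeff_weight paths_0 weight_def omega_H_def)

lemma coeff_U_0: "coeff_U q 0 = 0"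
proof -
  have empty: "{w \<in> paths 0. w \<noteq> [] \<and> hd w = U} = {}" by (simp add: paths_0)
  show ?thesis unfolding coeff_U_def empty by simp
qed

lemma schroeder_coeff_Suc:
  "schroeder_coeff q (Suc n) = q * schroeder_coeff q n + coeff_U q (Suc n)"
proof -
  have "schroeder_coeff q (Suc n) = (\<Sum>w\<in>Cons H ` paths n. q ^ weight w) + coeff_U q (Suc n)"
    unfolding schroeder_coeff_weight coeff_U_def
    by (subst paths_Suc, subst sum.union_disjoint) (auto simp: paths_Suc[symmetric])
  also have "(\<Sum>w\<in>Cons H ` paths n. q ^ weight w) = (\<Sum>w\<in>paths n. q ^ weight (H # w))"
    by (subst sum.reindex) auto
  also have "\<dots> = q * schroeder_coeff q n"
    by (simp add: weight_H schroeder_coeff_weight sum_distrib_left)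
  finally show ?thesis .
qed

text \<open>The seam correction multiplies paths starting with U by an extra factor q.\<close>
lemma sum_weight_starts_U:
  "(\<Sum>b\<in>paths m. q ^ (weight b + starts_U b)) = schroeder_coeff q m + (q - 1) * coeff_U q m"
proof -
  have "(\<Sum>b\<in>paths m. q ^ (weight b + starts_U b)) =
        (\<Sum>b\<in>paths m. q ^ weight b + (q - 1) * (if b \<noteq> [] \<and> hd b = U then q ^ weight b else 0))"
    by (intro sum.cong) (auto simp: starts_U_def algebra_simps)
  also have "\<dots> = schroeder_coeff q m + (q - 1) * coeff_U q m"
    by (simp add: sum.distrib schroeder_coeff_weight coeff_U_def sum_distrib_left[symmetric]
        sum.inter_filter)
  finally show ?thesis .
qed

lemma coeff_U_Suc:
  "coeff_U q (Suc n) =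
     (\<Sum>i\<le>n. schroeder_coeff q i * (schroeder_coeff q (n-i) + (q-1) * coeff_U q (n-i)))"
proof -
  let ?I = "SIGMA i:{..n}. paths i \<times> paths (n-i)"
  have "coeff_U q (Suc n) = (\<Sum>x\<in>?I. q ^ weight (lift_glue x))"
    unfolding coeff_U_def paths_starting_with_U
    by (rule sum.reindex[OF inj_on_lift_glue, unfolded comp_def])
  also have "\<dots> = (\<Sum>(i,ab)\<in>?I. (\<lambda>(a,b). q ^ weight a * q ^ (weight b + starts_U b)) ab)"
    by (intro sum.cong) (auto simp: lift_glue_def weight_lift_glue power_add)
  also have "\<dots> = (\<Sum>i\<le>n. \<Sum>(a,b)\<in>paths i \<times> paths (n-i). q ^ weight a * q ^ (weight b + starts_U b))"
    by (subst sum.Sigma) auto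
  also have "\<dots> = (\<Sum>i\<le>n. (\<Sum>a\<in>paths i. q ^ weight a) *
                          (\<Sum>b\<in>paths (n-i). q ^ (weight b + starts_U b)))"
    by (intro sum.cong refl) (simp add: sum_product sum.cartesian_product)
  also have "\<dots> = (\<Sum>i\<le>n. schroeder_coeff q i * (schroeder_coeff q (n-i) + (q-1) * coeff_U q (n-i)))"
    by (simp add: sum_weight_starts_U schroeder_coeff_weight)
  finally show ?thesis .
qed

section \<open>The quadratic equation for the generating series\<close>

text \<open>The recurrences say \<open>A = 1 + q x A + B\<close> and \<open>B = x A (A + (q - 1) B)\<close> for the series
  \<open>A\<close> of all paths and \<open>B\<close> of paths starting with U; eliminating \<open>B\<close> gives a quadratic.\<close>
lemma schroeder_fps_quadratic:
  fixes q :: real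
  defines "A \<equiv> Abs_fps (schroeder_coeff q)"
  shows "fps_const q * fps_X * (1 + fps_const (1-q) * fps_X) * A * A + (fps_X - 1) * A + 1 = 0"
proof -
  define B where "B = Abs_fps (coeff_U q)"
  have eq_A: "A = 1 + fps_const q * fps_X * A + B"
  proof (rule fps_ext)
    fix n show "fps_nth A n = fps_nth (1 + fps_const q * fps_X * A + B) n"
      by (cases n) (simp_all add: A_def B_def schroeder_coeff_0 coeff_U_0 schroeder_coeff_Suc mult.assoc)
  qed
  have eq_B: "B = fps_X * (A * (A + fps_const (q-1) * B))"
  proof (rule fps_ext)
    fix n show "fps_nth B n = fps_nth (fps_X * (A * (A + fps_const (q-1) * B))) n"
    proof (cases n)
      case (Suc m)
      have "fps_nth (fps_X * (A * (A + fps_const (q-1) * B))) n =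
            fps_nth (A * (A + fps_const (q-1) * B)) m"
        using Suc by simp
      also have "\<dots> = (\<Sum>i=0..m. fps_nth A i * fps_nth (A + fps_const (q-1) * B) (m-i))"
        by (rule fps_mult_nth)
      also have "\<dots> = fps_nth B n" using Suc by (simp add: A_def B_def coeff_U_Suc atLeast0AtMost)
      finally show ?thesis ..
    qed (simp add: B_def coeff_U_0)
  qed
  define Q where "Q = fps_const q"
  have B_eq: "B = A - 1 - Q * fps_X * A" using eq_A by (simp add: Q_def algebra_simps)
  have "A - 1 - Q * fps_X * A = fps_X * (A * (A + (Q - 1) * (A - 1 - Q * fps_X * A)))"
    using eq_B unfolding B_eq by (simp add: Q_def fps_const_sub[symmetric])
  then have "Q * fps_X * (1 + (1 - Q) * fps_X) * A * A + (fps_X - 1) * A + 1 = 0"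
    by (simp add: algebra_simps)
  then show ?thesis by (simp add: Q_def fps_const_sub[symmetric])
qed

section \<open>Convergence near the origin\<close>

text \<open>At most \<open>3 \<cdot> 9^n\<close> paths, each contributing at most \<open>max(1,|q|)^(4n)\<close>.\<close>
lemma abs_schroeder_coeff_le: "\<bar>schroeder_coeff q n\<bar> \<le> 3 * (9 * max 1 \<bar>q\<bar> ^ 4) ^ n"
proof -
  define M where "M = max 1 \<bar>q\<bar>"
  have M1: "1 \<le> M" by (simp add: M_def)
  have term_le: "\<bar>q ^ weight w\<bar> \<le> M ^ (4*n)" if "w \<in> paths n" for w
  proof -
    have "length w \<le> 2*n" using paths_subset_short_words that by blast
    then have "weight w \<le> 4*n" using weight_le[of w] by linarith
    have "\<bar>q ^ weight w\<bar> \<le> M ^ weight w" by (simp add: power_abs M_def power_mono)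
    also have "\<dots> \<le> M ^ (4*n)" by (rule power_increasing[OF \<open>weight w \<le> 4*n\<close> M1])
    finally show ?thesis .
  qed
  have "\<bar>schroeder_coeff q n\<bar> \<le> (\<Sum>w\<in>paths n. \<bar>q ^ weight w\<bar>)"
    unfolding schroeder_coeff_weight by (rule sum_abs)
  also have "\<dots> \<le> real (card (paths n)) * M ^ (4*n)"
    using sum_mono[OF term_le] by simp
  also have "\<dots> \<le> real (3 * 9^n) * M ^ (4*n)"
    using card_paths_le[of n] M1 by (intro mult_right_mono) (simp_all only: of_nat_le_iff, simp)
  also have "\<dots> = 3 * (9 * M^4) ^ n" by (simp add: power_mult power_mult_distrib)
  finally show ?thesis by (simp add: M_def)
qed

lemma fps_conv_radius_geometric_bound:
  fixes c :: "nat \<Rightarrow> real"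
  assumes bound: "\<And>n. \<bar>c n\<bar> \<le> C * K^n" and "0 < K"
  shows "ereal (1/K) \<le> fps_conv_radius (Abs_fps c)"
  unfolding fps_conv_radius_def
proof (rule conv_radius_geI_ex')
  fix r :: real assume r: "0 < r" "ereal r < ereal (1/K)"
  then have "K * r < 1" using \<open>0 < K\<close> by (simp add: field_simps)
  then have "summable (\<lambda>n. C * (K*r)^n)"
    using r \<open>0 < K\<close> by (intro summable_mult summable_geometric) simp
  then show "summable (\<lambda>n. fps_nth (Abs_fps c) n * of_real r ^ n)"
  proof (rule summable_comparison_test')
    fix n :: nat
    have "norm (fps_nth (Abs_fps c) n * of_real r ^ n) = \<bar>c n\<bar> * r^n"
      using r by (simp add: abs_mult power_abs)
    also have "\<dots> \<le> C * (K*r)^n"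
      using r bound[of n] by (simp add: mult_right_mono power_mult_distrib)
    finally show "norm (fps_nth (Abs_fps c) n * of_real r ^ n) \<le> C * (K*r)^n" .
  qed
qed

lemma abs_suminf_geometric_bound:
  fixes c :: "nat \<Rightarrow> real"
  assumes bound: "\<And>n. \<bar>c n\<bar> \<le> C * K^n" and "0 \<le> K" and Kx: "K * \<bar>x\<bar> < 1"
  shows "\<bar>\<Sum>n. c n * x^n\<bar> \<le> C / (1 - K * \<bar>x\<bar>)"
proof -
  have nc: "norm (K*\<bar>x\<bar>) < 1" using Kx \<open>0 \<le> K\<close> by simp
  have term_le: "norm (c n * x^n) \<le> C * (K*\<bar>x\<bar>)^n" for n
  proof -
    have "norm (c n * x^n) = \<bar>c n\<bar> * \<bar>x\<bar>^n" by (simp add: abs_mult power_abs)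
    also have "\<dots> \<le> C * K^n * \<bar>x\<bar>^n" using bound[of n] by (intro mult_right_mono) auto
    finally show ?thesis by (simp add: power_mult_distrib mult.assoc)
  qed
  have major: "summable (\<lambda>n. C * (K*\<bar>x\<bar>)^n)"
    using nc by (intro summable_mult summable_geometric)
  have norms: "summable (\<lambda>n. norm (c n * x^n))"
    by (rule summable_comparison_test'[OF major]) (use term_le in simp)
  have "\<bar>\<Sum>n. c n * x^n\<bar> \<le> (\<Sum>n. norm (c n * x^n))" using summable_norm[OF norms] by simp
  also have "\<dots> \<le> (\<Sum>n. C * (K*\<bar>x\<bar>)^n)" by (rule suminf_le[OF term_le norms major])
  also have "\<dots> = C / (1 - K * \<bar>x\<bar>)"
    using suminf_mult[OF summable_geometric[OF nc], of C] suminf_geometric[OF nc] by simp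
  finally show ?thesis .
qed

lemma eval_fps_quadratic:
  fixes A :: "real fps"
  assumes "ereal \<bar>x\<bar> < fps_conv_radius A"
  shows "eval_fps (fps_const q * fps_X * (1 + fps_const p * fps_X) * A * A + (fps_X - 1) * A + 1) x
       = q * x * (1 + p * x) * eval_fps A x * eval_fps A x + (x - 1) * eval_fps A x + 1"
proof -
  have mult: "ereal \<bar>x\<bar> < fps_conv_radius (F * G)" "ereal \<bar>x\<bar> < fps_conv_radius (F + G)"
    "ereal \<bar>x\<bar> < fps_conv_radius (F - G)"
    if "ereal \<bar>x\<bar> < fps_conv_radius F" "ereal \<bar>x\<bar> < fps_conv_radius G" for F G :: "real fps"
    using that fps_conv_radius_mult[of F G] fps_conv_radius_add[of F G] fps_conv_radius_diff[of F G]
    by (auto simp: min_def split: if_splits)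
  show ?thesis
    using assms by (simp add: eval_fps_mult eval_fps_add eval_fps_diff mult)
qed

lemma schroeder_series_near_0:
  fixes q x :: real
  defines "K \<equiv> 9 * max 1 \<bar>q\<bar> ^ 4"
  assumes x: "\<bar>x\<bar> < 1 / (2 * K)"
  shows "\<exists>S. (\<lambda>n. schroeder_coeff q n * x ^ n) sums S \<and> \<bar>S\<bar> \<le> 6 \<and>
           q * x * (1 + (1 - q) * x) * S * S + (x - 1) * S + 1 = 0"
proof -
  define A where "A = Abs_fps (schroeder_coeff q)"
  have "0 < K" by (simp add: K_def)
  have bound: "\<bar>schroeder_coeff q n\<bar> \<le> 3 * K^n" for n
    unfolding K_def by (rule abs_schroeder_coeff_le)
  have Kx: "K * \<bar>x\<bar> \<le> 1/2" using x \<open>0 < K\<close> by (simp add: field_simps)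
  have "ereal \<bar>x\<bar> < ereal (1/K)" using x \<open>0 < K\<close> by (simp add: field_simps)
  also have "\<dots> \<le> fps_conv_radius A"
    unfolding A_def by (rule fps_conv_radius_geometric_bound[OF bound \<open>0 < K\<close>])
  finally have rad: "ereal \<bar>x\<bar> < fps_conv_radius A" .
  define S where "S = eval_fps A x"
  have sums: "(\<lambda>n. schroeder_coeff q n * x ^ n) sums S"
    using sums_eval_fps[of x A] rad by (simp add: S_def A_def)
  have "\<bar>S\<bar> \<le> 3 / (1 - K * \<bar>x\<bar>)"
    using abs_suminf_geometric_bound[OF bound, of x] \<open>0 < K\<close> Kx sums by (simp add: sums_iff)
  also have "\<dots> \<le> 6" using Kx by (simp add: field_simps)
  finally have "\<bar>S\<bar> \<le> 6" .
  moreover have "q * x * (1 + (1 - q) * x) * S * S + (x - 1) * S + 1 =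
      eval_fps (fps_const q * fps_X * (1 + fps_const (1 - q) * fps_X) * A * A + (fps_X - 1) * A + 1) x"
    unfolding S_def by (rule eval_fps_quadratic[OF rad, symmetric])
  moreover have "\<dots> = 0" unfolding A_def schroeder_fps_quadratic by simp
  ultimately show ?thesis using sums by auto
qed

section \<open>Selecting the branch of the square root\<close>

lemma quadratic_root_minus_branch:
  fixes a b c s :: real
  assumes root: "a * s^2 + b * s + c = 0" and side: "2 * a * s + b < 0" and "a \<noteq> 0"
  shows "s = (- b - sqrt (b^2 - 4 * a * c)) / (2 * a)"
proof -
  have "(2 * a * s + b)^2 - (b^2 - 4 * a * c) = 4 * a * (a * s^2 + b * s + c)"
    by (simp add: power2_eq_square algebra_simps)
  then have "(2 * a * s + b)^2 = b^2 - 4 * a * c" using root by simp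
  then have "sqrt (b^2 - 4 * a * c) = - (2 * a * s + b)"
    using side by (metis real_sqrt_abs abs_of_neg)
  then have "- b - sqrt (b^2 - 4 * a * c) = 2 * a * s" by simp
  then show ?thesis using \<open>a \<noteq> 0\<close> by simp
qed

text \<open>For small x a bounded root of the Schroeder quadratic lies left of the vertex,
  so it equals the claimed closed form.\<close>
lemma schroeder_root_closed_form:
  fixes q x S :: real
  assumes "q \<noteq> 0" "x \<noteq> 0"
    and small: "\<bar>x\<bar> * (1 + \<bar>1 - q\<bar>) < 1" "\<bar>x\<bar> * (24 * \<bar>q\<bar> + 1) < 1"
    and "\<bar>S\<bar> \<le> 6" and root: "q * x * (1 + (1 - q) * x) * S * S + (x - 1) * S + 1 = 0"
  shows "S = (1 - x - sqrt (1 - 2 * (1 + 2 * q) * x + (1 - 2 * q)^2 * x^2))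
                / (2 * q * x * (1 + (1 - q) * x))"
proof -
  define E where "E = 1 + (1 - q) * x"
  have "\<bar>(1 - q) * x\<bar> < 1" using small(1) by (simp add: abs_mult distrib_left mult.commute)
  then have E: "0 < E" "\<bar>E\<bar> \<le> 2" unfolding E_def by auto
  have "\<bar>E\<bar> * \<bar>S\<bar> \<le> 2 * 6" using E \<open>\<bar>S\<bar> \<le> 6\<close> by (intro mult_mono) auto
  then have "2 * \<bar>q\<bar> * \<bar>x\<bar> * (\<bar>E\<bar> * \<bar>S\<bar>) \<le> 2 * \<bar>q\<bar> * \<bar>x\<bar> * (2 * 6)"
    by (intro mult_left_mono) auto
  then have "\<bar>2 * (q * x * E) * S\<bar> \<le> 24 * \<bar>q\<bar> * \<bar>x\<bar>" by (simp add: abs_mult)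
  moreover have "\<bar>x\<bar> * (24 * \<bar>q\<bar> + 1) = 24 * \<bar>q\<bar> * \<bar>x\<bar> + \<bar>x\<bar>"
    by (simp add: algebra_simps)
  ultimately have side: "2 * (q * x * E) * S + (x - 1) < 0"
    using small(2) abs_ge_self[of "2 * (q * x * E) * S"] abs_ge_self[of x] by linarith
  have "q * x * E \<noteq> 0" using assms E by simp
  moreover have "(q * x * E) * S^2 + (x - 1) * S + 1 = 0"
    using root unfolding E_def power2_eq_square by (simp add: mult.assoc)
  ultimately have "S = (- (x - 1) - sqrt ((x - 1)^2 - 4 * (q * x * E) * 1)) / (2 * (q * x * E))"
    using quadratic_root_minus_branch[OF _ side] by blast
  moreover have disc: "(x - 1)^2 - 4 * (q * x * E) * 1 = 1 - 2 * (1 + 2 * q) * x + (1 - 2 * q)^2 * x^2"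
    by (simp add: E_def power2_eq_square algebra_simps)
  ultimately show ?thesis by (simp only: disc minus_diff_eq E_def mult.assoc)
qed

theorem mainTheorem12:
  fixes q :: real
  assumes "q \<noteq> 0"
  shows "\<exists>r>0. \<forall>x::real. 0 < \<bar>x\<bar> \<and> \<bar>x\<bar> < r \<longrightarrow>
           (\<lambda>n. schroeder_coeff q n * x ^ n) sums
             ((1 - x - sqrt (1 - 2 * (1 + 2 * q) * x + (1 - 2 * q)^2 * x^2))
                / (2 * q * x * (1 + (1 - q) * x)))"
proof -
  define K where "K = 9 * max 1 \<bar>q\<bar> ^ 4"
  define r where "r = min (1 / (2 * K)) (min (1 / (1 + \<bar>1 - q\<bar>)) (1 / (24 * \<bar>q\<bar> + 1)))"
  have "0 < 1 / (2 * K)" "0 < 1 / (1 + \<bar>1 - q\<bar>)" "0 < 1 / (24 * \<bar>q\<bar> + 1)"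
    by (simp_all add: K_def add_pos_nonneg add_nonneg_pos)
  then have "0 < r" by (simp add: r_def)
  moreover have "(\<lambda>n. schroeder_coeff q n * x ^ n) sums
             ((1 - x - sqrt (1 - 2 * (1 + 2 * q) * x + (1 - 2 * q)^2 * x^2))
                / (2 * q * x * (1 + (1 - q) * x)))"
    if x: "0 < \<bar>x\<bar>" "\<bar>x\<bar> < r" for x
  proof -
    have "\<bar>x\<bar> < 1 / (2 * K)" "\<bar>x\<bar> < 1 / (1 + \<bar>1 - q\<bar>)" "\<bar>x\<bar> < 1 / (24 * \<bar>q\<bar> + 1)"
      using x by (simp_all add: r_def)
    then have small: "\<bar>x\<bar> * (1 + \<bar>1 - q\<bar>) < 1" "\<bar>x\<bar> * (24 * \<bar>q\<bar> + 1) < 1"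
      by (simp_all add: pos_less_divide_eq add_pos_nonneg add_nonneg_pos)
    from schroeder_series_near_0[OF \<open>\<bar>x\<bar> < 1 / (2 * K)\<close>[unfolded K_def]]
    obtain S where sums: "(\<lambda>n. schroeder_coeff q n * x ^ n) sums S"
      and bounded: "\<bar>S\<bar> \<le> 6" and root: "q * x * (1 + (1 - q) * x) * S * S + (x - 1) * S + 1 = 0"
      by blast
    have "x \<noteq> 0" using x by simp
    from schroeder_root_closed_form[OF assms this small bounded root] sums
    show ?thesis by (simp only:)
  qed
  ultimately show ?thesis by blast
qed

end
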